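(* Consider NSGA-III (as defined in the context) on an arbitrary $m$-objective function $f:\{0,1\}^n\to\mathbb N_0^m$ with $\varepsilon_{\mathrm{nad}}\ge f_{\max}$ and reference set $\mathcal R_p$ with $p\ge 2m^{3/2}f_{\max}$, any population size, any initial population and any rule for choosing the extreme points. Then in every generation $t$, any two search points in $F^1_t$ that are associated with the same reference point of $\mathcal R_p$ have the same fitness vector.
   Context: Let $f=(f_1,\dots,f_m):\{0,1\}^n\to\mathbb N_0^m$ be an $m$-objective function to be maximized, and $f_{\max}:=\max\{f_j(x): x\in\{0,1\}^n, j\in[m]\}$, assumed $\ge 1$. For $x,y\in\{0,1\}^n$: $x\succeq y$ ($x$ weakly dominates $y$) iff $f_j(x)\ge f_j(y)$ for all $j$; $x\succ y$ iff $x\succeq y$ and $f_j(x)>f_j(y)$ for some $j$; $x,y$ are incomparable if neither $x\succeq y$ nor $y\succeq x$. For $p\in\mathbb N$ the reference set is $\mathcal R_p=\{(a_1/p,\dots,a_m/p): (a_1,\dots,a_m)\in\mathbb N_0^m,\ \sum_i a_i=p\}$. NSGA-III with population size $\mu$, threshold $\varepsilon_{\mathrm{nad}}>0$ and reference set $\mathcal R_p$: start with a population $P_0$ (a multiset of $\mu$ bit strings; arbitrary), $E_0=\{(-\infty,\dots,-\infty)\}$, $y^{\max}=(-\infty,\dots,-\infty)$, $y^{\min}=(+\infty,\dots,+\infty)$. In generation $t=0,1,2,\dots$: (1) Offspring: $Q_t$ consists of $\mu$ offspring, each created independently by choosing a parent uniformly at random from $P_t$ and flipping each of its bits independently with probability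 $1/n$. (2) Sorting: $R_t=P_t\cup Q_t$ (multiset of size $2\mu$) is partitioned into layers $F^1_t,\dots,F^k_t$, where $F^1_t$ consists of the members of $R_t$ not dominated (w.r.t. $\succ$) by any member of $R_t$, and $F^i_t$ consists of the members of $R_t\setminus(F^1_t\cup\dots\cup F^{i-1}_t)$ not dominated by any member of that set. Let $i^*$ be the index with $\sum_{i<i^*}|F^i_t|<\mu\le\sum_{i\le i^*}|F^i_t|$, and $Y_t=\bigcup_{i<i^*}F^i_t$. (3) Normalization: for each $j$, set $y^{\min}_j\leftarrow\min(y^{\min}_j,\min_{x\in R_t}f_j(x))$ and $y^{\max}_j\leftarrow\max(y^{\max}_j,\max_{x\in F^1_t}f_j(x))$ (so these are running extremes over all generations so far), and choose an extreme point $e^{(j)}\in f(Y_t\cup F^{i^*}_t)\cup E_t$ by some fixed rule (originally via an achievement scalarization function); set $E_{t+1}=\{e^{(1)},\dots,e^{(m)}\}$. If $e^{(1)},\dots,e^{(m)}$ are linearly independent, let $H$ be the affine hyperplane through them; if for every $j$ the hyperplane $H$ meets the $j$-th coordinate axis in exactly one point $I_j u_j$ ($u_j$ the $j$-th unit vector) with $\varepsilon_{\mathrm{nad}}\le I_j\le y^{\max}_j$, set $y^{\mathrm{nad}}_j=I_j$ for all $j$. Otherwise (including linear dependence) set $y^{\mathrm{nad}}_j=\max_{x\in F^1_t}f_j(x)$ for all $j$. Afterwards, for every $j$ with $y^{\mathrm{nad}}_j<y^{\min}_j+\varepsilon_{\mathrm{nad}}$, reset $y^{\mathrm{nad}}_j=\max_{x\in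 R_t}f_j(x)$. The normalized objectives are $f^n_j(x)=(f_j(x)-y^{\min}_j)/(y^{\mathrm{nad}}_j-y^{\min}_j)$ (with the convention $f^n_j(x):=0$ if the denominator is $0$), $f^n=(f^n_1,\dots,f^n_m)$. (4) Association: each $x\in Y_t\cup F^{i^*}_t$ is associated with a reference point $\mathrm{rp}(x)\in\mathcal R_p$ minimizing the Euclidean distance from $f^n(x)$ to the line $\{\lambda r:\lambda\in\mathbb R\}$ (equivalently, minimizing the angle between $f^n(x)$ and $r$); ties are broken by a deterministic rule depending only on $f^n(x)$. (5) Selection: let $\rho_r=|\{x\in Y_t:\mathrm{rp}(x)=r\}|$ for $r\in\mathcal R_p$, $\tilde F=\emptyset$, $R'=\mathcal R_p$. Repeat: choose $r\in R'$ with minimal $\rho_r$ (ties uniformly at random); if some $x\in F^{i^*}_t\setminus\tilde F$ has $\mathrm{rp}(x)=r$, add to $\tilde F$ such an $x$ minimizing the distance between $f^n(x)$ and $r$ (ties uniformly at random), increase $\rho_r$ by one, and stop as soon as $|Y_t|+|\tilde F|=\mu$; otherwise remove $r$ from $R'$. Set $P_{t+1}=Y_t\cup\tilde F$. *)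

theory Defs
  imports "HOL-Analysis.Analysis" "HOL-Library.Multiset"
begin

text \<open>Objective functions are f :: bool list => nat^'m (m = CARD('m) objectives);
  search points are bit strings of length n (bool lists).\<close>

definition fmax :: "nat \<Rightarrow> (bool list \<Rightarrow> nat^'m) \<Rightarrow> nat" where
  "fmax n f = Max {f x $ j | x j. length x = n}"

definition weakly_dom :: "(bool list \<Rightarrow> nat^'m) \<Rightarrow> bool list \<Rightarrow> bool list \<Rightarrow> bool" where
  "weakly_dom f x y \<longleftrightarrow> (\<forall>j. f y $ j \<le> f x $ j)"

definition strictly_dom :: "(bool list \<Rightarrow> nat^'m) \<Rightarrow> bool list \<Rightarrow> bool list \<Rightarrow> bool" where
  "strictly_dom f x y \<longleftrightarrow> weakly_dom f x y \<and> (\<exists>j. f y $ j < f x $ j)"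

definition nondom_part :: "(bool list \<Rightarrow> nat^'m) \<Rightarrow> bool list multiset \<Rightarrow> bool list multiset" where
  "nondom_part f R = filter_mset (\<lambda>x. \<not> (\<exists>y\<in>#R. strictly_dom f y x)) R"

primrec rest :: "(bool list \<Rightarrow> nat^'m) \<Rightarrow> bool list multiset \<Rightarrow> nat \<Rightarrow> bool list multiset" where
  "rest f R 0 = R"
| "rest f R (Suc i) = rest f R i - nondom_part f (rest f R i)"

text \<open>front f R i is the layer F^(i+1) (0-indexed); front f R 0 = F^1.\<close>
definition front :: "(bool list \<Rightarrow> nat^'m) \<Rightarrow> bool list multiset \<Rightarrow> nat \<Rightarrow> bool list multiset" where
  "front f R i = nondom_part f (rest f R i)"

text \<open>0-indexed critical layer index i* - 1.\<close>
definition crit_idx :: "(bool list \<Rightarrow> nat^'m) \<Rightarrow> nat \<Rightarrow> bool list multiset \<Rightarrow> nat" where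
  "crit_idx f \<mu> R = (LEAST k. \<mu> \<le> size (R - rest f R (Suc k)))"

text \<open>Y_t = union of the layers before the critical one.\<close>
definition Yset :: "(bool list \<Rightarrow> nat^'m) \<Rightarrow> nat \<Rightarrow> bool list multiset \<Rightarrow> bool list multiset" where
  "Yset f \<mu> R = R - rest f R (crit_idx f \<mu> R)"

definition Fcrit :: "(bool list \<Rightarrow> nat^'m) \<Rightarrow> nat \<Rightarrow> bool list multiset \<Rightarrow> bool list multiset" where
  "Fcrit f \<mu> R = front f R (crit_idx f \<mu> R)"

definition ref_set :: "nat \<Rightarrow> (real^'m) set" where
  "ref_set p = {(\<chi> i. real (a $ i) / real p) | a :: nat^'m. (\<Sum>i\<in>UNIV. a $ i) = p}"

definition line_dist :: "real^'m \<Rightarrow> real^'m \<Rightarrow> real" where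
  "line_dist v r = infdist v (range (\<lambda>c::real. c *\<^sub>R r))"

definition is_assoc_rule :: "nat \<Rightarrow> (real^'m \<Rightarrow> real^'m) \<Rightarrow> bool" where
  "is_assoc_rule p assoc \<longleftrightarrow>
     (\<forall>v. assoc v \<in> ref_set p \<and> (\<forall>r\<in>ref_set p. line_dist v (assoc v) \<le> line_dist v r))"

definition fvec :: "(bool list \<Rightarrow> nat^'m) \<Rightarrow> bool list \<Rightarrow> ereal^'m" where
  "fvec f x = (\<chi> k. ereal (real (f x $ k)))"

definition upd_min :: "(bool list \<Rightarrow> nat^'m) \<Rightarrow> bool list multiset \<Rightarrow> ereal^'m \<Rightarrow> ereal^'m" where
  "upd_min f R ymin = (\<chi> j. min (ymin $ j) (ereal (Min ((\<lambda>x. real (f x $ j)) ` set_mset R))))"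

definition upd_max :: "(bool list \<Rightarrow> nat^'m) \<Rightarrow> bool list multiset \<Rightarrow> ereal^'m \<Rightarrow> ereal^'m" where
  "upd_max f F1 ymax = (\<chi> j. max (ymax $ j) (ereal (Max ((\<lambda>x. real (f x $ j)) ` set_mset F1))))"

definition ext_real :: "('m \<Rightarrow> ereal^'m) \<Rightarrow> 'm \<Rightarrow> real^'m" where
  "ext_real es j = (\<chi> k. real_of_ereal (es j $ k))"

definition intercept :: "('m \<Rightarrow> ereal^'m) \<Rightarrow> 'm \<Rightarrow> real" where
  "intercept es j = (THE I. I *\<^sub>R axis j (1::real) \<in> affine hull (range (ext_real es)))"

definition hyperplane_ok :: "real \<Rightarrow> ereal^'m \<Rightarrow> ('m \<Rightarrow> ereal^'m) \<Rightarrow> bool" where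
  "hyperplane_ok eps ymax es \<longleftrightarrow>
     (\<forall>j k. \<bar>es j $ k\<bar> \<noteq> \<infinity>) \<and>
     inj (ext_real es) \<and> independent (range (ext_real es)) \<and>
     (\<forall>j. \<exists>!I. I *\<^sub>R axis j (1::real) \<in> affine hull (range (ext_real es))) \<and>
     (\<forall>j. eps \<le> intercept es j \<and> ereal (intercept es j) \<le> ymax $ j)"

definition nadir :: "real \<Rightarrow> (bool list \<Rightarrow> nat^'m) \<Rightarrow> bool list multiset \<Rightarrow> bool list multiset
                     \<Rightarrow> real^'m \<Rightarrow> ereal^'m \<Rightarrow> ('m \<Rightarrow> ereal^'m) \<Rightarrow> real^'m" where
  "nadir eps f R F1 ymin ymax es =
    (let pre = (if hyperplane_ok eps ymax es then (\<chi> j. intercept es j)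
                else (\<chi> j. Max ((\<lambda>x. real (f x $ j)) ` set_mset F1)))
     in (\<chi> j. if pre $ j < ymin $ j + eps then Max ((\<lambda>x. real (f x $ j)) ` set_mset R)
              else pre $ j))"

definition fnorm :: "(bool list \<Rightarrow> nat^'m) \<Rightarrow> real^'m \<Rightarrow> real^'m \<Rightarrow> bool list \<Rightarrow> real^'m" where
  "fnorm f ymin ynad x =
    (\<chi> j. if ynad $ j - ymin $ j = 0 then 0
          else (real (f x $ j) - ymin $ j) / (ynad $ j - ymin $ j))"

definition normf :: "real \<Rightarrow> (bool list \<Rightarrow> nat^'m) \<Rightarrow> bool list multiset \<Rightarrow> ereal^'m \<Rightarrow> ereal^'m
                     \<Rightarrow> ('m \<Rightarrow> ereal^'m) \<Rightarrow> bool list \<Rightarrow> real^'m" where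
  "normf eps f R ymin ymax es =
    (let F1 = front f R 0;
         ymin' = (\<chi> j. real_of_ereal (upd_min f R ymin $ j));
         ymax' = upd_max f F1 ymax
     in fnorm f ymin' (nadir eps f R F1 ymin' ymax' es))"

definition admissible_extremes :: "(bool list \<Rightarrow> nat^'m) \<Rightarrow> bool list multiset \<Rightarrow> (ereal^'m) set
                                   \<Rightarrow> ('m \<Rightarrow> ereal^'m) \<Rightarrow> bool" where
  "admissible_extremes f C E es \<longleftrightarrow> (\<forall>j. es j \<in> fvec f ` set_mset C \<union> E)"

text \<open>niche rpf d F k \<rho> Ft R' Fin: starting from counters \<rho>, already chosen Ft and
  remaining reference points R', the niching loop can terminate with the chosen multiset Fin
  (|Fin| = k = mu - |Y|).  rpf x is the associated reference point, d x the distance used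
  for choosing within a niche.\<close>
inductive niche :: "(bool list \<Rightarrow> real^'m) \<Rightarrow> (bool list \<Rightarrow> real) \<Rightarrow> bool list multiset \<Rightarrow> nat
                    \<Rightarrow> (real^'m \<Rightarrow> nat) \<Rightarrow> bool list multiset \<Rightarrow> (real^'m) set \<Rightarrow> bool list multiset \<Rightarrow> bool"
  for rpf d F k where
  add_stop: "\<lbrakk> r \<in> R'; \<forall>r'\<in>R'. \<rho> r \<le> \<rho> r'; x \<in># F - Ft; rpf x = r;
              \<forall>y\<in>#F - Ft. rpf y = r \<longrightarrow> d x \<le> d y; size (Ft + {#x#}) = k \<rbrakk>
             \<Longrightarrow> niche rpf d F k \<rho> Ft R' (Ft + {#x#})"
| add_cont: "\<lbrakk> r \<in> R'; \<forall>r'\<in>R'. \<rho> r \<le> \<rho> r'; x \<in># F - Ft; rpf x = r;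
              \<forall>y\<in>#F - Ft. rpf y = r \<longrightarrow> d x \<le> d y; size (Ft + {#x#}) \<noteq> k;
              niche rpf d F k (\<rho>(r := Suc (\<rho> r))) (Ft + {#x#}) R' Fin \<rbrakk>
             \<Longrightarrow> niche rpf d F k \<rho> Ft R' Fin"
| remove: "\<lbrakk> r \<in> R'; \<forall>r'\<in>R'. \<rho> r \<le> \<rho> r'; \<not> (\<exists>x\<in>#F - Ft. rpf x = r);
            niche rpf d F k \<rho> Ft (R' - {r}) Fin \<rbrakk>
           \<Longrightarrow> niche rpf d F k \<rho> Ft R' Fin"

definition valid_pop :: "nat \<Rightarrow> nat \<Rightarrow> bool list multiset \<Rightarrow> bool" where
  "valid_pop n k P \<longleftrightarrow> size P = k \<and> (\<forall>x\<in>#P. length x = n)"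

text \<open>States (P_t, E_t, y^max, y^min) reachable at the start of some generation t of some run
  (arbitrary initial population, arbitrary outcomes of the random choices, arbitrary choice of
  extreme points from the admissible set).  Every multiset of mu bit strings of length n is a
  possible offspring population Q_t (standard bit mutation has full support).\<close>
inductive nsga3_reachable :: "nat \<Rightarrow> nat \<Rightarrow> nat \<Rightarrow> real \<Rightarrow> (bool list \<Rightarrow> nat^'m) \<Rightarrow> (real^'m \<Rightarrow> real^'m)
      \<Rightarrow> bool list multiset \<Rightarrow> (ereal^'m) set \<Rightarrow> ereal^'m \<Rightarrow> ereal^'m \<Rightarrow> bool"
  for n \<mu> p eps f assoc where
  init: "valid_pop n \<mu> P0 \<Longrightarrow>
           nsga3_reachable n \<mu> p eps f assoc P0 {(\<chi> k. - \<infinity>)} (\<chi> k. - \<infinity>) (\<chi> k. \<infinity>)"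
| step: "\<lbrakk> nsga3_reachable n \<mu> p eps f assoc P E ymax ymin;
           valid_pop n \<mu> Q;
           admissible_extremes f (Yset f \<mu> (P + Q) + Fcrit f \<mu> (P + Q)) E es;
           niche (\<lambda>x. assoc (normf eps f (P + Q) ymin ymax es x))
                 (\<lambda>x. line_dist (normf eps f (P + Q) ymin ymax es x)
                                (assoc (normf eps f (P + Q) ymin ymax es x)))
                 (Fcrit f \<mu> (P + Q)) (\<mu> - size (Yset f \<mu> (P + Q)))
                 (\<lambda>r. size (filter_mset (\<lambda>x. assoc (normf eps f (P + Q) ymin ymax es x) = r)
                                        (Yset f \<mu> (P + Q))))
                 {#} (ref_set p) Fin \<rbrakk>
         \<Longrightarrow> nsga3_reachable n \<mu> p eps f assoc (Yset f \<mu> (P + Q) + Fin) (range es)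
               (upd_max f (front f (P + Q) 0) ymax) (upd_min f (P + Q) ymin)"

end

theory Submission imports Defs begin

text \<open>
  Two members of the first front with different fitness are incomparable, so there are objectives
  \<open>i\<close>, \<open>j\<close> in which they differ in opposite directions. Because \<open>\<epsilon>\<^sub>n\<^sub>a\<^sub>d \<ge> f\<^sub>m\<^sub>a\<^sub>x\<close>, the
  normalization is an affine rescaling with scale at most \<open>f\<^sub>m\<^sub>a\<^sub>x\<close> into \<open>[0,1]\<^sup>m\<close>, hence the
  normalized vectors differ by at least \<open>1/f\<^sub>m\<^sub>a\<^sub>x\<close> in these two coordinates, in opposite directions.
  Rounding to the grid \<open>\<R>\<^sub>p\<close> places every non-zero point of \<open>[0,1]\<^sup>m\<close> within distance
  \<open>m powr (3/2) / p \<le> 1/(2 f\<^sub>m\<^sub>a\<^sub>x)\<close> of the line through its associated reference point. Two points this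
  close to the same ray through a non-negative direction cannot be separated in opposite directions
  by \<open>1/f\<^sub>m\<^sub>a\<^sub>x\<close>.
\<close>

lemma infdist_less_imp_dist_less:
  assumes "A \<noteq> {}" "infdist x A < t"
  shows "\<exists>a\<in>A. dist x a < t"
proof -
  have "(INF a\<in>A. dist x a) < t" using assms by (simp add: infdist_notempty)
  moreover have "bdd_below ((\<lambda>a. dist x a) ` A)" by (rule bdd_belowI[of _ 0]) auto
  ultimately show ?thesis using assms(1) by (simp add: cINF_less_iff)
qed

lemma ref_set_nonneg: "r \<in> ref_set p \<Longrightarrow> 0 \<le> r $ k"
  unfolding ref_set_def by (auto intro!: divide_nonneg_nonneg sum_nonneg)

text \<open>Whichever of \<open>c\<^sub>u\<close>, \<open>c\<^sub>w\<close> is larger, one of the two gaps would have to be absorbed by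
  the approximation errors alone.\<close>
lemma opposite_gaps_not_near_same_ray:
  fixes u w r :: "real^'m"
  assumes "\<forall>k. 0 \<le> r $ k" "dist u (cu *\<^sub>R r) < \<delta>/2" "dist w (cw *\<^sub>R r) < \<delta>/2"
    and "\<delta> \<le> u $ i - w $ i" "\<delta> \<le> w $ j - u $ j"
  shows False
proof -
  define eu where "eu = u - cu *\<^sub>R r"
  define ew where "ew = w - cw *\<^sub>R r"
  have err: "\<bar>eu $ k\<bar> < \<delta>/2" "\<bar>ew $ k\<bar> < \<delta>/2" for k
    using assms(2,3) component_le_norm_cart[of eu k] component_le_norm_cart[of ew k]
    by (auto simp: eu_def ew_def dist_norm)
  have u: "u $ k = cu * r $ k + eu $ k" and w: "w $ k = cw * r $ k + ew $ k" for k
    by (auto simp: eu_def ew_def)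
  show False
  proof (cases "cw \<le> cu")
    case True
    then have "(cw - cu) * r $ j \<le> 0" using assms(1) by (simp add: mult_nonpos_nonneg)
    then have "w $ j - u $ j \<le> ew $ j - eu $ j" using u[of j] w[of j] by (simp add: algebra_simps)
    then show False using err[of j] assms(5) by (simp add: abs_less_iff)
  next
    case False
    then have "(cu - cw) * r $ i \<le> 0" using assms(1) by (simp add: mult_nonpos_nonneg)
    then have "u $ i - w $ i \<le> eu $ i - ew $ i" using u[of i] w[of i] by (simp add: algebra_simps)
    then show False using err[of i] assms(4) by (simp add: abs_less_iff)
  qed
qed

text \<open>Floor every coordinate, then round up \<open>D\<close> of the coordinates with a non-zero fractional
  part, where \<open>D\<close> is the total deficit (at most the number of such coordinates).\<close>
lemma simplex_rounding:
  fixes v :: "real^'m" and p :: nat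
  assumes "\<forall>k. 0 \<le> v $ k" "(\<Sum>k\<in>UNIV. v $ k) = 1"
  shows "\<exists>a::nat^'m. (\<Sum>k\<in>UNIV. a $ k) = p \<and> (\<forall>k. \<bar>real p * v $ k - real (a $ k)\<bar> < 1)"
proof -
  define c where "c k = nat \<lfloor>real p * v $ k\<rfloor>" for k
  have c1: "real (c k) \<le> real p * v $ k" and c2: "real p * v $ k < real (c k) + 1" for k
    using assms(1) by (auto simp: c_def)
  have p_sum: "(\<Sum>k\<in>UNIV. real p * v $ k) = real p"
    using assms(2) by (simp add: sum_distrib_left[symmetric])
  define D where "D = p - (\<Sum>k\<in>UNIV. c k)"
  have "(\<Sum>k\<in>UNIV. real (c k)) \<le> (\<Sum>k\<in>UNIV. real p * v $ k)"
    by (rule sum_mono) (use c1 in auto)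
  then have sum_c_le: "(\<Sum>k\<in>UNIV. c k) \<le> p"
    using p_sum by (simp flip: of_nat_sum)
  have D: "real D = (\<Sum>k\<in>UNIV. real p * v $ k - real (c k))"
    using sum_c_le by (simp add: D_def sum_subtractf p_sum)
  define T where "T = {k. real (c k) < real p * v $ k}"
  have "real D = (\<Sum>k\<in>T. real p * v $ k - real (c k))"
    unfolding D by (rule sum.mono_neutral_right)
      (use c1 in \<open>auto simp: T_def intro: order.not_eq_order_implies_strict\<close>)
  also have "\<dots> \<le> (\<Sum>k\<in>T. 1)"
    by (rule sum_mono) (use c2 in \<open>smt (verit)\<close>)
  finally have "D \<le> card T" by simp
  then obtain S where S: "card S = D" "S \<subseteq> T" by (meson obtain_subset_with_card_n)
  define a where "a = (\<chi> k. c k + (if k \<in> S then 1 else 0))"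
  have "(\<Sum>k\<in>UNIV. a $ k) = (\<Sum>k\<in>UNIV. c k) + card S"
    by (simp add: a_def sum.distrib sum.If_cases)
  also have "\<dots> = p" using S(1) sum_c_le by (simp add: D_def)
  finally have "(\<Sum>k\<in>UNIV. a $ k) = p" .
  moreover have "\<bar>real p * v $ k - real (a $ k)\<bar> < 1" for k
    using c1[of k] c2[of k] S(2) by (auto simp: a_def T_def)
  ultimately show ?thesis by blast
qed

lemma ref_set_approx_simplex:
  fixes v :: "real^'m"
  assumes "0 < p" "\<forall>k. 0 \<le> v $ k" "(\<Sum>k\<in>UNIV. v $ k) = 1"
  shows "\<exists>r\<in>ref_set p. norm (v - r) < sqrt (real CARD('m)) / real p"
proof -
  obtain a :: "nat^'m" where a: "(\<Sum>k\<in>UNIV. a $ k) = p" "\<forall>k. \<bar>real p * v $ k - real (a $ k)\<bar> < 1"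
    using simplex_rounding[OF assms(2,3)] by blast
  define r where "r = (\<chi> k. real (a $ k) / real p)"
  have r: "r \<in> ref_set p" unfolding ref_set_def r_def using a(1) by blast
  have "\<bar>v $ k - r $ k\<bar> < 1 / real p" for k
  proof -
    have "real p * \<bar>v $ k - r $ k\<bar> = \<bar>real p * (v $ k - r $ k)\<bar>" by (simp add: abs_mult)
    also have "\<dots> = \<bar>real p * v $ k - real (a $ k)\<bar>"
      using assms(1) by (simp add: r_def right_diff_distrib)
    finally have "real p * \<bar>v $ k - r $ k\<bar> = \<bar>real p * v $ k - real (a $ k)\<bar>" .
    then show ?thesis using a(2) assms(1) by (simp add: field_simps)
  qed
  then have "(v $ k - r $ k)\<^sup>2 < (1 / real p)\<^sup>2" for k
    by (metis abs_ge_zero power2_abs power_strict_mono zero_less_numeral)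
  then have "(\<Sum>k\<in>UNIV. (v $ k - r $ k)\<^sup>2) < (\<Sum>k\<in>(UNIV::'m set). (1 / real p)\<^sup>2)"
    by (intro sum_strict_mono) auto
  then have "norm (v - r) < sqrt (\<Sum>k\<in>(UNIV::'m set). (1 / real p)\<^sup>2)"
    by (simp add: norm_vec_def L2_set_def)
  also have "\<dots> = sqrt (real CARD('m)) / real p"
    by (simp add: real_sqrt_mult power_divide real_sqrt_divide)
  finally show ?thesis using r by blast
qed

lemma ref_set_line_dist_less:
  fixes v :: "real^'m"
  assumes "0 < p" "\<forall>k. 0 \<le> v $ k \<and> v $ k \<le> 1" "v \<noteq> 0"
  shows "\<exists>r\<in>ref_set p. line_dist v r < real CARD('m) powr (3/2) / real p"
proof -
  define s where "s = (\<Sum>k\<in>UNIV. v $ k)"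
  obtain k where "v $ k \<noteq> 0" using assms(3) by (auto simp: vec_eq_iff)
  then have s_pos: "0 < s" unfolding s_def using assms(2)
    by (intro sum_pos2[where i=k]) (auto simp: order.not_eq_order_implies_strict)
  have s_le: "s \<le> real CARD('m)"
    unfolding s_def using sum_mono[of UNIV "\<lambda>k. v $ k" "\<lambda>_. 1"] assms(2) by auto
  have "(\<Sum>k\<in>UNIV. (v /\<^sub>R s) $ k) = 1"
    using s_pos by (simp add: sum_distrib_left[symmetric] s_def[symmetric])
  then obtain r where r: "r \<in> ref_set p" "norm (v /\<^sub>R s - r) < sqrt (real CARD('m)) / real p"
    using ref_set_approx_simplex[OF assms(1), of "v /\<^sub>R s"] assms(2) s_pos by auto
  have "v - s *\<^sub>R r = s *\<^sub>R (v /\<^sub>R s - r)" using s_pos by (simp add: scaleR_diff_right)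
  moreover have "line_dist v r \<le> dist v (s *\<^sub>R r)" unfolding line_dist_def by (rule infdist_le) auto
  ultimately have "line_dist v r \<le> s * norm (v /\<^sub>R s - r)" using s_pos by (simp add: dist_norm)
  also have "\<dots> < real CARD('m) * (sqrt (real CARD('m)) / real p)"
    using r(2) s_pos s_le by (intro mult_le_less_imp_less) auto
  also have "\<dots> = real CARD('m) powr (3/2) / real p"
    by (simp add: powr_half_sqrt[symmetric] powr_add[symmetric] powr_mult_base)
  finally show ?thesis using r(1) by blast
qed

lemma assoc_distinct_if_opposite_gaps:
  fixes u w :: "real^'m"
  assumes "is_assoc_rule p assoc" "0 < p" "real CARD('m) powr (3/2) / real p \<le> \<delta>/2" "0 < \<delta>"
    and "\<forall>k. 0 \<le> u $ k \<and> u $ k \<le> 1" "\<forall>k. 0 \<le> w $ k \<and> w $ k \<le> 1"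
    and "\<delta> \<le> u $ i - w $ i" "\<delta> \<le> w $ j - u $ j"
  shows "assoc u \<noteq> assoc w"
proof
  assume same: "assoc u = assoc w"
  have near_ray: "\<exists>c. dist v (c *\<^sub>R assoc v) < \<delta>/2"
    if v: "\<forall>k. 0 \<le> v $ k \<and> v $ k \<le> 1" "v \<noteq> 0" for v :: "real^'m"
  proof -
    obtain r where r: "r \<in> ref_set p" "line_dist v r < real CARD('m) powr (3/2) / real p"
      using ref_set_line_dist_less[OF assms(2) v] by blast
    moreover have "line_dist v (assoc v) \<le> line_dist v r"
      using assms(1) r(1) by (simp add: is_assoc_rule_def)
    ultimately have "infdist v (range (\<lambda>c::real. c *\<^sub>R assoc v)) < \<delta>/2"
      using assms(3) unfolding line_dist_def by linarith
    then obtain a where "a \<in> range (\<lambda>c::real. c *\<^sub>R assoc v)" "dist v a < \<delta>/2"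
      using infdist_less_imp_dist_less by blast
    then show ?thesis by blast
  qed
  have "u $ i > 0" "w $ j > 0" using assms(4-8) by (smt (verit))+
  then have "u \<noteq> 0" "w \<noteq> 0" by auto
  then obtain cu cw where "dist u (cu *\<^sub>R assoc u) < \<delta>/2" "dist w (cw *\<^sub>R assoc u) < \<delta>/2"
    using near_ray assms(5,6) same by metis
  moreover have "\<forall>k. 0 \<le> assoc u $ k"
    using assms(1) unfolding is_assoc_rule_def by (blast intro: ref_set_nonneg)
  ultimately show False using opposite_gaps_not_near_same_ray assms(7,8) by blast
qed

lemma rest_subset: "rest f R i \<subseteq># R"
  by (induction i) (auto intro: subset_mset.order_trans[OF diff_subset_eq_self])

lemma front_subset: "front f R i \<subseteq># R"
  unfolding front_def nondom_part_def
  by (meson multiset_filter_subset rest_subset subset_mset.order_trans)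

text \<open>A maximizer of the objective sum is dominated by nobody.\<close>
lemma nondom_part_nonempty:
  assumes "R \<noteq> {#}"
  shows "nondom_part f R \<noteq> {#}"
proof -
  define g where "g z = (\<Sum>j\<in>UNIV. f z $ j)" for z
  have "Max (g ` set_mset R) \<in> g ` set_mset R" using assms by (intro Max_in) auto
  then obtain z where z: "z \<in># R" "g z = Max (g ` set_mset R)" by auto
  have "\<not> strictly_dom f y z" if "y \<in># R" for y
  proof
    assume "strictly_dom f y z"
    then have "g z < g y" unfolding g_def strictly_dom_def weakly_dom_def
      by (intro sum_strict_mono_ex1) auto
    moreover have "g y \<le> g z" using z that by simp
    ultimately show False by simp
  qed
  then show ?thesis using z(1) by (auto simp: nondom_part_def filter_mset_eq_conv)
qed

lemma front_incomparable:
  assumes "x \<in># front f R 0" "y \<in># front f R 0" "f x \<noteq> f y"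
  obtains i j where "f y $ i < f x $ i" "f x $ j < f y $ j"
proof -
  have nondom: "\<not> strictly_dom f y x" "\<not> strictly_dom f x y"
    using assms(1,2) by (auto simp: front_def nondom_part_def)
  obtain k where "f x $ k \<noteq> f y $ k" using assms(3) by (auto simp: vec_eq_iff)
  then have "\<exists>i. f y $ i < f x $ i" "\<exists>j. f x $ j < f y $ j"
    using nondom unfolding strictly_dom_def weakly_dom_def by (metis linorder_neqE_nat not_le)+
  then show ?thesis using that by blast
qed

lemma niche_subset: "niche rpf d F k \<rho> Ft R' Fin \<Longrightarrow> z \<in># Fin \<Longrightarrow> z \<in># Ft \<or> z \<in># F"
  by (induction rule: niche.induct) (auto dest: in_diffD)

lemma fmax_ge:
  assumes "length z = n"
  shows "f z $ j \<le> fmax n f"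
proof -
  have "{f x $ j | x j. length x = n} = (\<lambda>(x, j). f x $ j) ` ({x. length x = n} \<times> UNIV)" by auto
  then have "finite {f x $ j | x j. length x = n}"
    using finite_lists_length_eq[of "UNIV :: bool set" n] by simp
  then show ?thesis unfolding fmax_def using assms by (intro Max_ge) auto
qed

lemma Max_objective_le_fmax:
  assumes "F \<noteq> {#}" "\<forall>z\<in>#F. length z = n"
  shows "Max ((\<lambda>x. real (f x $ j)) ` set_mset F) \<le> real (fmax n f)"
  using assms fmax_ge[of _ n f j] by (subst Max_le_iff) auto

lemma nsga3_reachable_invariant:
  assumes "nsga3_reachable n \<mu> p eps f assoc P E ymax ymin" "1 \<le> \<mu>"
  shows "(\<forall>z\<in>#P. length z = n) \<and> (\<forall>j. ymax $ j \<le> ereal (real (fmax n f))) \<and> (\<forall>j. 0 \<le> ymin $ j)"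
  using assms(1)
proof (induction rule: nsga3_reachable.induct)
  case (init P0)
  then show ?case by (auto simp: valid_pop_def)
next
  case (step P E ymax ymin Q es Fin)
  let ?R = "P + Q"
  have Q_ne: "Q \<noteq> {#}" using step(2) assms(2) by (auto simp: valid_pop_def)
  have R_len: "\<forall>z\<in>#?R. length z = n" using step by (auto simp: valid_pop_def)
  have F1_ne: "front f ?R 0 \<noteq> {#}" unfolding front_def using Q_ne by (simp add: nondom_part_nonempty)
  have F1_len: "\<forall>z\<in>#front f ?R 0. length z = n" using R_len front_subset by (metis mset_subset_eqD)
  have "z \<in># ?R" if "z \<in># Yset f \<mu> ?R + Fin" for z
    using that niche_subset[OF step(4)] front_subset[of f ?R, THEN mset_subset_eqD]
    by (auto simp: Yset_def Fcrit_def dest: in_diffD)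
  then have "\<forall>z\<in>#Yset f \<mu> ?R + Fin. length z = n" using R_len by blast
  moreover have "upd_max f (front f ?R 0) ymax $ j \<le> ereal (real (fmax n f))" for j
    using step.IH Max_objective_le_fmax[OF F1_ne F1_len, of f j] by (simp add: upd_max_def)
  moreover have "0 \<le> upd_min f ?R ymin $ j" for j
  proof -
    have "0 \<le> Min ((\<lambda>x. real (f x $ j)) ` set_mset ?R)" using Q_ne by (subst Min_ge_iff) auto
    then show ?thesis using step.IH by (simp add: upd_min_def)
  qed
  ultimately show ?case by blast
qed

text \<open>This is where \<open>\<epsilon>\<^sub>n\<^sub>a\<^sub>d \<ge> f\<^sub>m\<^sub>a\<^sub>x\<close> enters: a nadir value \<open>pre\<close> that is kept satisfies
  \<open>pre \<ge> y\<^sub>m\<^sub>i\<^sub>n + \<epsilon> \<ge> y\<^sub>m\<^sub>i\<^sub>n + M\<close>, which together with \<open>pre \<le> M\<close> forces \<open>y\<^sub>m\<^sub>i\<^sub>n = 0\<close> and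
  \<open>pre = M\<close>.\<close>
lemma nadir_reset_bounds:
  fixes g :: "'a \<Rightarrow> real"
  assumes "finite S" "S \<noteq> {}" "\<forall>z\<in>S. g z \<le> M" "0 \<le> ymn" "M \<le> eps" "pre \<le> M"
  defines "nd \<equiv> if pre < ymn + eps then Max (g ` S) else pre"
  shows "nd - ymn \<le> M" "\<forall>z\<in>S. g z \<le> nd"
proof -
  have "Max (g ` S) \<le> M" "\<forall>z\<in>S. g z \<le> Max (g ` S)"
    using assms(1-3) by (auto simp: Max_le_iff)
  then show "nd - ymn \<le> M" "\<forall>z\<in>S. g z \<le> nd"
    using assms(3-6) by (auto simp: nd_def)
qed

lemma normf_affine:
  assumes "R \<noteq> {#}" "\<forall>z\<in>#R. length z = n"
    and "\<forall>j. ymax $ j \<le> ereal (real (fmax n f))" "\<forall>j. 0 \<le> ymin $ j" "real (fmax n f) \<le> eps"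
  obtains y d where "d \<le> real (fmax n f)" "\<forall>z\<in>#R. y \<le> real (f z $ j) \<and> real (f z $ j) - y \<le> d"
    and "\<And>z. normf eps f R ymin ymax es z $ j = (if d = 0 then 0 else (real (f z $ j) - y) / d)"
proof -
  let ?F1 = "front f R 0"
  let ?g = "\<lambda>z. real (f z $ j)"
  define y where "y = real_of_ereal (upd_min f R ymin $ j)"
  define ymax' where "ymax' = upd_max f ?F1 ymax"
  define pre where "pre = (if hyperplane_ok eps ymax' es then intercept es j
                           else Max (?g ` set_mset ?F1))"
  define nd where "nd = (if pre < y + eps then Max (?g ` set_mset R) else pre)"
  have F1_ne: "?F1 \<noteq> {#}" unfolding front_def using assms(1) by (simp add: nondom_part_nonempty)
  have F1_len: "\<forall>z\<in>#?F1. length z = n" using assms(2) front_subset by (metis mset_subset_eqD)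
  have Max_F1: "Max (?g ` set_mset ?F1) \<le> real (fmax n f)"
    by (rule Max_objective_le_fmax[OF F1_ne F1_len])
  have "ymax' $ j \<le> ereal (real (fmax n f))"
    using Max_F1 assms(3) by (simp add: ymax'_def upd_max_def)
  then have "hyperplane_ok eps ymax' es \<Longrightarrow> intercept es j \<le> real (fmax n f)"
    unfolding hyperplane_ok_def by (metis ereal_less_eq(3) order.trans)
  then have pre: "pre \<le> real (fmax n f)" using Max_F1 by (simp add: pre_def)
  define m where "m = Min (?g ` set_mset R)"
  have m: "0 \<le> m" "\<forall>z\<in>#R. m \<le> ?g z" using assms(1) by (auto simp: m_def)
  have "y = real_of_ereal (min (ymin $ j) (ereal m))" by (simp add: y_def upd_min_def m_def)
  then have y: "0 \<le> y \<and> (\<forall>z\<in>#R. y \<le> ?g z)"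
    using m assms(4)[rule_format, of j] by (cases "ymin $ j") (auto simp: min_def)
  have g_le: "\<forall>z\<in>set_mset R. ?g z \<le> real (fmax n f)"
    using assms(2) fmax_ge[of _ n f j] by simp
  have "nd - y \<le> real (fmax n f)" "\<forall>z\<in>#R. ?g z \<le> nd"
    using nadir_reset_bounds[of "set_mset R" ?g "real (fmax n f)" y eps pre] assms(1,5) y g_le pre
    by (auto simp: nd_def)
  moreover have "nadir eps f R ?F1 (\<chi> j. real_of_ereal (upd_min f R ymin $ j)) ymax' es $ j = nd"
    unfolding nadir_def Let_def nd_def pre_def y_def by (cases "hyperplane_ok eps ymax' es") simp_all
  then have "normf eps f R ymin ymax es z $ j = (if nd - y = 0 then 0 else (?g z - y) / (nd - y))" for z
    unfolding normf_def Let_def fnorm_def ymax'_def[symmetric] by (simp add: y_def)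
  ultimately show ?thesis using that[of "nd - y" y] y by auto
qed

lemma normf_bounds:
  fixes es :: "'m \<Rightarrow> ereal^'m"
  assumes "R \<noteq> {#}" "\<forall>z\<in>#R. length z = n"
    and "\<forall>j. ymax $ j \<le> ereal (real (fmax n f))" "\<forall>j. 0 \<le> ymin $ j" "real (fmax n f) \<le> eps"
  defines "nf \<equiv> normf eps f R ymin ymax es"
  shows normf_range: "z \<in># R \<Longrightarrow> 0 \<le> nf z $ j \<and> nf z $ j \<le> 1"
    and normf_gap: "\<lbrakk>z \<in># R; z' \<in># R; f z' $ j < f z $ j\<rbrakk>
                    \<Longrightarrow> 1 / real (fmax n f) \<le> nf z $ j - nf z' $ j"
proof -
  obtain y d where d: "d \<le> real (fmax n f)" "\<forall>z\<in>#R. y \<le> real (f z $ j) \<and> real (f z $ j) - y \<le> d"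
    and nf: "\<And>z. nf z $ j = (if d = 0 then 0 else (real (f z $ j) - y) / d)"
    using normf_affine[OF assms(1-5), of j es] unfolding nf_def by metis
  show "0 \<le> nf z $ j \<and> nf z $ j \<le> 1" if "z \<in># R"
  proof -
    have "y \<le> real (f z $ j)" "real (f z $ j) - y \<le> d" using d(2) that by auto
    then show ?thesis by (simp add: nf divide_le_eq_1)
  qed
  show "1 / real (fmax n f) \<le> nf z $ j - nf z' $ j"
    if z: "z \<in># R" "z' \<in># R" "f z' $ j < f z $ j"
  proof -
    from z have gap: "real (f z' $ j) + 1 \<le> real (f z $ j)" by linarith
    moreover have "real (f z $ j) - y \<le> d" "y \<le> real (f z' $ j)" using d(2) z by auto
    ultimately have d_pos: "0 < d" by linarith
    have "1 / real (fmax n f) \<le> 1 / d" using d(1) d_pos by (simp add: frac_le)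
    also have "\<dots> \<le> (real (f z $ j) - real (f z' $ j)) / d" using d_pos gap by (simp add: divide_right_mono)
    also have "\<dots> = nf z $ j - nf z' $ j" using d_pos by (simp add: nf diff_divide_distrib)
    finally show ?thesis .
  qed
qed

theorem lemma3:
  fixes n \<mu> p :: nat and eps :: real
    and f :: "bool list \<Rightarrow> nat^'m" and assoc :: "real^'m \<Rightarrow> real^'m"
    and P Q :: "bool list multiset" and E :: "(ereal^'m) set" and ymax ymin :: "ereal^'m"
    and es :: "'m \<Rightarrow> ereal^'m" and x y :: "bool list"
  assumes "1 \<le> \<mu>"
    and "1 \<le> fmax n f"
    and "real (fmax n f) \<le> eps"
    and "2 * real CARD('m) powr (3/2) * real (fmax n f) \<le> real p"
    and "is_assoc_rule p assoc"
    and "nsga3_reachable n \<mu> p eps f assoc P E ymax ymin"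
    and "valid_pop n \<mu> Q"
    and "admissible_extremes f (Yset f \<mu> (P + Q) + Fcrit f \<mu> (P + Q)) E es"
    and "x \<in># front f (P + Q) 0" and "y \<in># front f (P + Q) 0"
    and "assoc (normf eps f (P + Q) ymin ymax es x) = assoc (normf eps f (P + Q) ymin ymax es y)"
  shows "f x = f y"
proof (rule ccontr)
  assume "f x \<noteq> f y"
  then obtain i j where ij: "f y $ i < f x $ i" "f x $ j < f y $ j"
    using front_incomparable assms(9,10) by blast
  let ?R = "P + Q" and ?M = "real (fmax n f)"
  let ?nf = "normf eps f ?R ymin ymax es"
  have inv: "\<forall>z\<in>#?R. length z = n" "\<forall>j. ymax $ j \<le> ereal ?M" "\<forall>j. 0 \<le> ymin $ j"
    using nsga3_reachable_invariant[OF assms(6,1)] assms(7) by (auto simp: valid_pop_def)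
  have xy: "x \<in># ?R" "y \<in># ?R" using assms(9,10) front_subset by (blast dest: mset_subset_eqD)+
  then have R: "?R \<noteq> {#}" by auto
  have range: "\<forall>k. 0 \<le> ?nf z $ k \<and> ?nf z $ k \<le> 1" if "z \<in># ?R" for z
    using normf_range[OF R inv assms(3) that] by blast
  have gaps: "1 / ?M \<le> ?nf x $ i - ?nf y $ i" "1 / ?M \<le> ?nf y $ j - ?nf x $ j"
    using normf_gap[OF R inv assms(3)] xy ij by blast+
  have "0 < 2 * real CARD('m) powr (3/2) * ?M" using assms(2) by simp
  then have p: "0 < real p" using assms(4) by linarith
  then have "real CARD('m) powr (3/2) / real p \<le> (1 / ?M) / 2"
    using assms(2,4) by (simp add: field_simps)
  moreover have "0 < p" "0 < 1 / ?M" using p assms(2) by auto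
  ultimately have "assoc (?nf x) \<noteq> assoc (?nf y)"
    using assoc_distinct_if_opposite_gaps[OF assms(5)] range[OF xy(1)] range[OF xy(2)] gaps
    by blast
  then show False using assms(11) by simp
qed

end
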